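(* Let $\mathrm{cleaf}_2:\mathbb{R}\to\mathbb{R}$ be the leaf function of basis $2$. For every real $l$ with $c:=\mathrm{cleaf}_2(l)\neq-1$, $$\Bigl(\mathrm{cleaf}_2\Bigl(\frac l2\Bigr)\Bigr)^2=\frac{-1+c+\sqrt2\sqrt{1+c^2}}{1+c}.$$
   Context: For a natural number $n$, the leaf function $\mathrm{cleaf}_n:\mathbb{R}\to\mathbb{R}$ is the solution of $\frac{\mathrm{d}^2r}{\mathrm{d}l^2}=-n\,r^{2n-1}$ with $r(0)=1$, $r'(0)=0$. *)

theory Defs
  imports "HOL-Analysis.Analysis"
begin

definition cleaf :: "nat \<Rightarrow> real \<Rightarrow> real" where
  "cleaf n = (THE r. \<exists>r'. r 0 = 1 \<and> r' 0 = 0 \<and>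
      (\<forall>l. (r has_real_derivative r' l) (at l)) \<and>
      (\<forall>l. (r' has_real_derivative (- real n * r l ^ (2 * n - 1))) (at l)))"

end

theory Submission
  imports Defs
begin

text \<open>
  Energy conservation and a Gronwall estimate show that the leaf equation has at most one
  solution, so cleaf_n is whatever solution one can exhibit. For n = 2 one is cos \<circ> \<phi>,
  where the amplitude \<phi> solves \<phi>' = sqrt (1 + cos^2 \<phi>). The rational map D = duplication,
  D c = (c^4 + 2 c^2 - 1) / (1 + 2 c^2 - c^4) transforms solutions: if r solves the
  equation, so does u \<mapsto> D (r (u/2)), hence cleaf_2 l = D (cleaf_2 (l/2)). Solving
  this equation, a quadratic in cleaf_2 (l/2)^2, for the nonnegative root gives the formula.
\<close>

lemma Gronwall_zero_nonneg:
  fixes D D' :: "real \<Rightarrow> real"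
  assumes deriv: "\<And>x. (D has_real_derivative D' x) (at x)"
    and nonneg: "\<And>x. 0 \<le> D x" and "D 0 = 0"
    and bound: "\<And>x. \<bar>D' x\<bar> \<le> K * D x"
    and "0 \<le> t"
  shows "D t = 0"
proof -
  have "D t * exp (-K * t) \<le> D 0 * exp (-K * 0)"
  proof (rule DERIV_nonpos_imp_nonincreasing[OF \<open>0 \<le> t\<close>])
    fix x
    have "((\<lambda>x. D x * exp (-K * x)) has_real_derivative (D' x - K * D x) * exp (-K * x)) (at x)"
      by (auto intro!: derivative_eq_intros deriv simp: algebra_simps)
    moreover have "(D' x - K * D x) * exp (-K * x) \<le> 0"
      using abs_le_D1[OF bound[of x]] by (simp add: mult_nonpos_nonneg)
    ultimately show "\<exists>y. ((\<lambda>x. D x * exp (-K * x)) has_real_derivative y) (at x) \<and> y \<le> 0"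
      by blast
  qed
  then have "D t * exp (-K * t) \<le> 0"
    using \<open>D 0 = 0\<close> by simp
  then have "D t \<le> 0"
    by (simp add: mult_le_0_iff)
  with nonneg[of t] show ?thesis
    by simp
qed

lemma Gronwall_zero:
  fixes D D' :: "real \<Rightarrow> real"
  assumes deriv: "\<And>x. (D has_real_derivative D' x) (at x)"
    and nonneg: "\<And>x. 0 \<le> D x" and "D 0 = 0"
    and bound: "\<And>x. \<bar>D' x\<bar> \<le> K * D x"
  shows "D t = 0"
proof (cases "0 \<le> t")
  case True
  then show ?thesis by (rule Gronwall_zero_nonneg[OF assms])
next
  case False
  have "(\<lambda>x. D (-x)) (-t) = 0"
  proof (rule Gronwall_zero_nonneg[where D="\<lambda>x. D (-x)" and D'="\<lambda>x. - D' (-x)" and K=K and t="-t"])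
    show "((\<lambda>x. D (-x)) has_real_derivative - D' (-x)) (at x)" for x
      using DERIV_chain2[OF deriv DERIV_minus[OF DERIV_ident]] by simp
  qed (use False nonneg bound \<open>D 0 = 0\<close> in auto)
  then show ?thesis
    by simp
qed

lemma autonomous_ODE_solution:
  fixes h :: "real \<Rightarrow> real"
  assumes cont: "continuous_on UNIV h" and pos: "\<And>x. 0 < h x" and bounded: "\<And>x. h x \<le> M"
  obtains \<phi> where "\<phi> 0 = 0" and "\<And>y. (\<phi> has_real_derivative h (\<phi> y)) (at y)"
proof -
  have "isCont (\<lambda>x. 1 / h x) x" for x
  proof -
    have "isCont h x"
      using cont by (simp add: continuous_on_eq_continuous_at)
    then show ?thesis
      using pos[of x] by (intro continuous_intros) auto
  qed
  then obtain F where "\<And>x. (F has_vector_derivative 1 / h x) (at x)"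
    using einterval_antiderivative[of "-\<infinity>" "\<infinity>" "\<lambda>x. 1 / h x"] by auto
  then have F: "(F has_real_derivative 1 / h x) (at x)" for x
    by (simp add: has_real_derivative_iff_has_vector_derivative)
  define G where "G x = F x - F 0" for x
  have G: "(G has_real_derivative 1 / h x) (at x)" for x
    unfolding G_def[abs_def] using DERIV_diff[OF F DERIV_const] by simp
  have "G 0 = 0"
    by (simp add: G_def)
  have "strict_mono G"
  proof (rule strict_monoI)
    show "G x < G y" if "x < y" for x y
      by (rule DERIV_pos_imp_increasing[OF that]) (metis G pos zero_less_divide_1_iff)
  qed
  have "0 < M"
    using pos[of 0] bounded[of 0] by simp
  have slope: "G x - x / M \<le> G y - y / M" if "x \<le> y" for x y
  proof (rule DERIV_nonneg_imp_nondecreasing[OF that])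
    fix z
    have "((\<lambda>x. G x - x / M) has_real_derivative 1 / h z - 1 / M) (at z)"
      using DERIV_diff[OF G DERIV_cdivide[OF DERIV_ident]] by simp
    moreover have "1 / h z - 1 / M \<ge> 0"
      using pos[of z] bounded[of z] by (simp add: frac_le)
    ultimately show "\<exists>d. ((\<lambda>x. G x - x / M) has_real_derivative d) (at z) \<and> d \<ge> 0"
      by blast
  qed
  have G_cont: "isCont G x" for x
    using G by (rule DERIV_isCont)
  have "\<exists>x. G x = y" for y
  proof -
    define B where "B = M * \<bar>y\<bar>"
    have "B \<ge> 0"
      using \<open>0 < M\<close> by (simp add: B_def)
    have "G (-B) \<le> y"
      using slope[of "-B" 0] \<open>G 0 = 0\<close> \<open>0 < M\<close> \<open>B \<ge> 0\<close> by (simp add: B_def)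
    moreover have "y \<le> G B"
      using slope[of 0 B] \<open>G 0 = 0\<close> \<open>0 < M\<close> \<open>B \<ge> 0\<close> by (simp add: B_def)
    ultimately show ?thesis
      using IVT[of G "-B" y B] \<open>B \<ge> 0\<close> G_cont by force
  qed
  then have "surj G"
    by (metis surjI)
  define \<phi> where "\<phi> = inv G"
  have G_\<phi>: "G (\<phi> y) = y" for y
    by (simp add: \<phi>_def surj_f_inv_f[OF \<open>surj G\<close>])
  have \<phi>_G: "\<phi> (G x) = x" for x
    by (simp add: \<phi>_def inv_f_f strict_mono_imp_inj_on[OF \<open>strict_mono G\<close>])
  show ?thesis
  proof
    show "\<phi> 0 = 0"
      using \<phi>_G[of 0] \<open>G 0 = 0\<close> by simp
    fix y
    have "isCont \<phi> (G (\<phi> y))"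
      by (rule isCont_inverse_function[where d=1]) (use \<phi>_G G_cont in auto)
    then have "isCont \<phi> y"
      by (simp add: G_\<phi>)
    then have "(\<phi> has_real_derivative inverse (1 / h (\<phi> y))) (at y)"
      by (intro DERIV_inverse_function[where f=G and a="y - 1" and b="y + 1"])
        (use G pos[of "\<phi> y"] G_\<phi> in auto)
    then show "(\<phi> has_real_derivative h (\<phi> y)) (at y)"
      by simp
  qed
qed

definition leaf_solution :: "nat \<Rightarrow> (real \<Rightarrow> real) \<Rightarrow> (real \<Rightarrow> real) \<Rightarrow> bool" where
  "leaf_solution n r r' \<longleftrightarrow> r 0 = 1 \<and> r' 0 = 0 \<and>
      (\<forall>l. (r has_real_derivative r' l) (at l)) \<and>
      (\<forall>l. (r' has_real_derivative (- real n * r l ^ (2 * n - 1))) (at l))"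

lemma leaf_solution_energy:
  assumes "leaf_solution n r r'"
  shows "r' l ^ 2 + r l ^ (2 * n) = 1"
proof -
  have r: "\<And>x. (r has_real_derivative r' x) (at x)"
    and r': "\<And>x. (r' has_real_derivative (- real n * r x ^ (2 * n - 1))) (at x)"
    using assms unfolding leaf_solution_def by auto
  have "((\<lambda>x. r' x ^ 2 + r x ^ (2 * n)) has_real_derivative 0) (at x)" for x
    by (auto intro!: derivative_eq_intros r r' simp: algebra_simps)
  then have "r' l ^ 2 + r l ^ (2 * n) = r' 0 ^ 2 + r 0 ^ (2 * n)"
    by (intro DERIV_isconst_all allI)
  then show ?thesis
    using assms by (simp add: leaf_solution_def)
qed

lemma leaf_solution_bounded:
  assumes "leaf_solution n r r'" and "n \<ge> 1"
  shows "\<bar>r l\<bar> \<le> 1"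
proof -
  have "\<bar>r l\<bar> ^ (2 * n) = r l ^ (2 * n)"
    by (simp add: power_even_abs)
  also have "\<dots> \<le> 1"
    using leaf_solution_energy[OF assms(1), of l] zero_le_power2[of "r' l"] by linarith
  finally show ?thesis
    using \<open>n \<ge> 1\<close> by (simp add: power_le_one_iff)
qed

lemma leaf_solution_unique:
  assumes r: "leaf_solution n r r'" and q: "leaf_solution n q q'"
  shows "r = q"
proof
  fix t
  let ?k = "2 * n - 1"
  define D where "D x = (r x - q x)\<^sup>2 + (r' x - q' x)\<^sup>2" for x
  define D' where "D' x = 2 * (r x - q x) * (r' x - q' x)
      - 2 * (r' x - q' x) * (real n * (r x ^ ?k - q x ^ ?k))" for x
  have r_deriv: "\<And>x. (r has_real_derivative r' x) (at x)"
    and r'_deriv: "\<And>x. (r' has_real_derivative (- real n * r x ^ ?k)) (at x)"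
    and q_deriv: "\<And>x. (q has_real_derivative q' x) (at x)"
    and q'_deriv: "\<And>x. (q' has_real_derivative (- real n * q x ^ ?k)) (at x)"
    using r q unfolding leaf_solution_def by auto
  have "(D has_real_derivative D' x) (at x)" for x
    unfolding D_def D'_def
    by (rule derivative_eq_intros r_deriv r'_deriv q_deriv q'_deriv refl)+ (simp add: algebra_simps)
  moreover have "0 \<le> D x" for x
    by (simp add: D_def)
  moreover have "D 0 = 0"
    using r q by (simp add: D_def leaf_solution_def)
  moreover have "\<bar>D' x\<bar> \<le> (1 + real n * ?k) * D x" for x
  proof -
    let ?a = "r x - q x" and ?b = "r' x - q' x"
    have power_bound: "\<bar>real n * (r x ^ ?k - q x ^ ?k)\<bar> \<le> real n * ?k * \<bar>?a\<bar>"
    proof (cases "n = 0")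
      case False
      then have "\<bar>r x ^ ?k - q x ^ ?k\<bar> \<le> ?k * \<bar>?a\<bar>"
        using norm_power_diff[of "r x" "q x" ?k] leaf_solution_bounded[OF r] leaf_solution_bounded[OF q]
        by simp
      then show ?thesis
        by (simp add: abs_mult mult.assoc mult_left_mono)
    qed simp
    have "\<bar>D' x\<bar> \<le> 2 * \<bar>?a\<bar> * \<bar>?b\<bar> + 2 * \<bar>?b\<bar> * \<bar>real n * (r x ^ ?k - q x ^ ?k)\<bar>"
      unfolding D'_def by (rule order_trans[OF abs_triangle_ineq4]) (simp only: abs_mult abs_numeral order_refl)
    also have "\<dots> \<le> 2 * \<bar>?a\<bar> * \<bar>?b\<bar> + 2 * \<bar>?b\<bar> * (real n * ?k * \<bar>?a\<bar>)"
      using power_bound by (simp add: mult_left_mono)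
    also have "\<dots> = (1 + real n * ?k) * (2 * \<bar>?a\<bar> * \<bar>?b\<bar>)"
      by (simp add: algebra_simps)
    also have "\<dots> \<le> (1 + real n * ?k) * D x"
      unfolding D_def by (intro mult_left_mono) (use sum_squares_bound[of "\<bar>?a\<bar>" "\<bar>?b\<bar>"] in auto)
    finally show ?thesis .
  qed
  ultimately have "D t = 0"
    by (rule Gronwall_zero)
  then show "r t = q t"
    by (simp add: D_def)
qed

lemma cleaf_eqI:
  assumes "leaf_solution n r r'"
  shows "cleaf n = r"
  unfolding cleaf_def leaf_solution_def[symmetric]
  by (rule the_equality) (use assms leaf_solution_unique in blast)+

lemma leaf_solution_2_exists:
  obtains r r' where "leaf_solution 2 r r'"
proof -
  define h where "h t = sqrt (1 + (cos t)\<^sup>2)" for t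
  have h_pos: "0 < h t" for t
    unfolding h_def by (simp add: add_pos_nonneg)
  have h_deriv: "(h has_real_derivative - (cos t * sin t) / h t) (at t)" for t
  proof -
    have "0 < 1 + (cos t)\<^sup>2"
      by (simp add: add_pos_nonneg)
    then show ?thesis
      unfolding h_def[abs_def] by (auto intro!: derivative_eq_intros simp: field_simps)
  qed
  have "continuous_on UNIV h"
    unfolding h_def by (intro continuous_intros)
  moreover have "h t \<le> sqrt 2" for t
    unfolding h_def by (simp add: abs_square_le_1)
  ultimately obtain \<phi> where "\<phi> 0 = 0" and \<phi>: "\<And>y. (\<phi> has_real_derivative h (\<phi> y)) (at y)"
    using autonomous_ODE_solution h_pos by blast
  have "leaf_solution 2 (\<lambda>l. cos (\<phi> l)) (\<lambda>l. - sin (\<phi> l) * h (\<phi> l))"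
    unfolding leaf_solution_def
  proof (intro conjI allI)
    fix l
    show "((\<lambda>l. cos (\<phi> l)) has_real_derivative - sin (\<phi> l) * h (\<phi> l)) (at l)"
      by (rule derivative_eq_intros \<phi> refl)+
    let ?c = "cos (\<phi> l)" and ?s = "sin (\<phi> l)"
    have "((\<lambda>l. - sin (\<phi> l) * h (\<phi> l)) has_real_derivative
        - (?c * h (\<phi> l)) * h (\<phi> l) - ?s * (- (?c * ?s) / h (\<phi> l) * h (\<phi> l))) (at l)"
      by (rule derivative_eq_intros \<phi> DERIV_chain2[OF h_deriv \<phi>] refl)+ (simp add: algebra_simps)
    moreover have "- (?c * h (\<phi> l)) * h (\<phi> l) - ?s * (- (?c * ?s) / h (\<phi> l) * h (\<phi> l))
        = - real 2 * ?c ^ (2 * 2 - 1)"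
    proof -
      have "- (?c * h (\<phi> l)) * h (\<phi> l) - ?s * (- (?c * ?s) / h (\<phi> l) * h (\<phi> l))
          = - ?c * (h (\<phi> l))\<^sup>2 + ?c * ?s\<^sup>2"
        using h_pos[of "\<phi> l"] by (simp add: power2_eq_square)
      also have "\<dots> = - ?c * (1 + ?c\<^sup>2) + ?c * (1 - ?c\<^sup>2)"
        by (simp add: h_def sin_squared_eq)
      also have "\<dots> = - real 2 * ?c ^ (2 * 2 - 1)"
        by (simp add: algebra_simps power2_eq_square power3_eq_cube)
      finally show ?thesis .
    qed
    ultimately show "((\<lambda>l. - sin (\<phi> l) * h (\<phi> l)) has_real_derivative - real 2 * ?c ^ (2 * 2 - 1)) (at l)"
      by simp
  qed (simp_all add: \<open>\<phi> 0 = 0\<close>)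
  then show ?thesis
    by (rule that)
qed

definition duplication :: "real \<Rightarrow> real" where
  "duplication c = (c ^ 4 + 2 * c\<^sup>2 - 1) / (1 + 2 * c\<^sup>2 - c ^ 4)"

definition duplication_deriv :: "real \<Rightarrow> real" where
  "duplication_deriv c = 8 * c * (1 + c ^ 4) / (1 + 2 * c\<^sup>2 - c ^ 4)\<^sup>2"

definition duplication_deriv2 :: "real \<Rightarrow> real" where
  "duplication_deriv2 c = 8 * (1 - 6 * c\<^sup>2 + 12 * c ^ 4 + 2 * c ^ 6 + 3 * c ^ 8) / (1 + 2 * c\<^sup>2 - c ^ 4) ^ 3"

lemma duplication_denom_pos:
  fixes c :: real
  assumes "\<bar>c\<bar> \<le> 1"
  shows "0 < 1 + 2 * c\<^sup>2 - c ^ 4"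
proof -
  have "c\<^sup>2 \<le> 1"
    using assms by (simp add: abs_square_le_1)
  then have "(1 - c\<^sup>2)\<^sup>2 \<le> 1"
    by (intro power_le_one) auto
  moreover have "1 + 2 * c\<^sup>2 - c ^ 4 = 2 - (1 - c\<^sup>2)\<^sup>2"
    by (simp add: power2_eq_square power4_eq_xxxx algebra_simps)
  ultimately show ?thesis
    by simp
qed

lemma duplication_has_derivative:
  assumes "\<bar>c\<bar> \<le> 1"
  shows "(duplication has_real_derivative duplication_deriv c) (at c)"
  using duplication_denom_pos[OF assms] unfolding duplication_def[abs_def] duplication_deriv_def
  by (auto intro!: derivative_eq_intros simp: field_simps power2_eq_square) algebra

lemma duplication_deriv_has_derivative:
  assumes "\<bar>c\<bar> \<le> 1"
  shows "(duplication_deriv has_real_derivative duplication_deriv2 c) (at c)"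
  using duplication_denom_pos[OF assms] unfolding duplication_deriv_def[abs_def] duplication_deriv2_def
  by (auto intro!: derivative_eq_intros simp: field_simps) algebra

lemma duplication_ode:
  assumes "\<bar>c\<bar> \<le> 1"
  shows "(- 2 * c ^ 3 * duplication_deriv c + (1 - c ^ 4) * duplication_deriv2 c) / 4 = - 2 * duplication c ^ 3"
  using duplication_denom_pos[OF assms] unfolding duplication_def duplication_deriv_def duplication_deriv2_def
  by (simp add: field_simps) algebra

lemma duplication_leaf_solution:
  assumes "leaf_solution 2 r r'"
  shows "leaf_solution 2 (\<lambda>u. duplication (r (u / 2))) (\<lambda>u. r' (u / 2) * duplication_deriv (r (u / 2)) / 2)"
  unfolding leaf_solution_def
proof (intro conjI allI)
  have r: "\<And>x. (r has_real_derivative r' x) (at x)"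
    and r': "\<And>x. (r' has_real_derivative - real 2 * r x ^ (2 * 2 - 1)) (at x)"
    and "r 0 = 1" "r' 0 = 0"
    using assms by (auto simp: leaf_solution_def)
  have bounded: "\<bar>r x\<bar> \<le> 1" for x
    using leaf_solution_bounded[OF assms] by simp
  show "duplication (r (0 / 2)) = 1" "r' (0 / 2) * duplication_deriv (r (0 / 2)) / 2 = 0"
    using \<open>r 0 = 1\<close> \<open>r' 0 = 0\<close> by (simp_all add: duplication_def)
  fix u
  let ?c = "r (u / 2)" and ?s = "r' (u / 2)"
  have half: "((\<lambda>u. u / 2) has_real_derivative 1 / 2) (at u)"
    using DERIV_cdivide[OF DERIV_ident, where c=2] .
  show "((\<lambda>u. duplication (r (u / 2))) has_real_derivative ?s * duplication_deriv ?c / 2) (at u)"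
    using DERIV_chain2[OF DERIV_chain2[OF duplication_has_derivative[OF bounded] r] half]
    by (simp add: algebra_simps)
  have "((\<lambda>u. r' (u / 2) * duplication_deriv (r (u / 2)) / 2) has_real_derivative
      (- real 2 * ?c ^ (2 * 2 - 1) * (1 / 2) * duplication_deriv ?c
        + duplication_deriv2 ?c * ?s * (1 / 2) * ?s) / 2) (at u)"
    using DERIV_cdivide[OF DERIV_mult[OF DERIV_chain2[OF r' half]
        DERIV_chain2[OF DERIV_chain2[OF duplication_deriv_has_derivative[OF bounded] r] half]], where c=2] .
  also have "(- real 2 * ?c ^ (2 * 2 - 1) * (1 / 2) * duplication_deriv ?c
        + duplication_deriv2 ?c * ?s * (1 / 2) * ?s) / 2
      = (- 2 * ?c ^ 3 * duplication_deriv ?c + ?s\<^sup>2 * duplication_deriv2 ?c) / 4"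
    by (simp add: field_simps power2_eq_square)
  also have "?s\<^sup>2 = 1 - ?c ^ 4"
    using leaf_solution_energy[OF assms, of "u / 2"] by simp
  also have "(- 2 * ?c ^ 3 * duplication_deriv ?c + (1 - ?c ^ 4) * duplication_deriv2 ?c) / 4
      = - real 2 * duplication ?c ^ (2 * 2 - 1)"
    using duplication_ode[OF bounded] by simp
  finally show "((\<lambda>u. r' (u / 2) * duplication_deriv (r (u / 2)) / 2) has_real_derivative
      - real 2 * duplication ?c ^ (2 * 2 - 1)) (at u)" .
qed

lemma square_eq_of_duplication:
  fixes x :: real
  assumes "\<bar>x\<bar> \<le> 1" and "duplication x \<noteq> -1"
  shows "x\<^sup>2 = (-1 + duplication x + sqrt 2 * sqrt (1 + (duplication x)\<^sup>2)) / (1 + duplication x)"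
proof -
  define c where "c = duplication x"
  define y where "y = x\<^sup>2"
  define M where "M = 1 + 2 * y - y\<^sup>2"
  have x4: "x ^ 4 = y\<^sup>2"
    by (simp add: y_def flip: power_mult)
  have "0 < M"
    using duplication_denom_pos[OF assms(1)] unfolding M_def x4 y_def[symmetric] .
  have "c = (y\<^sup>2 + 2 * y - 1) / M"
    unfolding c_def duplication_def M_def x4 y_def[symmetric] ..
  then have cM: "c * M = y\<^sup>2 + 2 * y - 1"
    using \<open>0 < M\<close> by simp
  have "0 \<le> y" "y \<le> 1"
    using assms(1) by (simp_all add: y_def abs_square_le_1)
  then have "y\<^sup>2 \<le> 1"
    by (rule power_le_one)
  have "(1 + c) * M = 4 * y"
    using cM unfolding M_def by algebra
  then have "0 \<le> 1 + c"
    using \<open>0 < M\<close> \<open>0 \<le> y\<close> by (smt (verit) mult_neg_pos)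
  moreover have "c \<noteq> -1"
    using assms(2) by (simp add: c_def)
  ultimately have "0 < 1 + c"
    by simp
  have "(1 - c) * M = 2 * (1 - y\<^sup>2)"
    using cM unfolding M_def by algebra
  then have "c \<le> 1"
    using \<open>0 < M\<close> \<open>y\<^sup>2 \<le> 1\<close> by (smt (verit) mult_neg_pos)
  define z where "z = (1 + c) * y"
  have "(z + (1 - c))\<^sup>2 = 2 + 2 * c\<^sup>2"
    using cM unfolding z_def M_def by algebra
  moreover have "0 \<le> z + (1 - c)"
    using \<open>0 < 1 + c\<close> \<open>0 \<le> y\<close> \<open>c \<le> 1\<close> by (simp add: z_def)
  ultimately have "sqrt (2 + 2 * c\<^sup>2) = z + (1 - c)"
    by (intro real_sqrt_unique)
  moreover have "sqrt 2 * sqrt (1 + c\<^sup>2) = sqrt (2 + 2 * c\<^sup>2)"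
    by (simp add: real_sqrt_mult[symmetric])
  ultimately have "sqrt 2 * sqrt (1 + c\<^sup>2) = z + (1 - c)"
    by simp
  then show ?thesis
    unfolding c_def[symmetric] y_def[symmetric] using \<open>0 < 1 + c\<close> by (simp add: z_def field_simps)
qed

lemma cleaf_2_leaf_solution:
  obtains r' where "leaf_solution 2 (cleaf 2) r'"
  using leaf_solution_2_exists cleaf_eqI by metis

lemma cleaf_2_duplication: "cleaf 2 l = duplication (cleaf 2 (l / 2))"
proof -
  obtain r' where sol: "leaf_solution 2 (cleaf 2) r'"
    by (rule cleaf_2_leaf_solution)
  have "cleaf 2 = (\<lambda>u. duplication (cleaf 2 (u / 2)))"
    by (rule cleaf_eqI[OF duplication_leaf_solution[OF sol]])
  then show ?thesis
    by (rule fun_cong)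
qed

theorem mainTheorem13:
  fixes l :: real
  assumes "cleaf 2 l \<noteq> -1"
  shows "(cleaf 2 (l / 2))\<^sup>2 =
    (-1 + cleaf 2 l + sqrt 2 * sqrt (1 + (cleaf 2 l)\<^sup>2)) / (1 + cleaf 2 l)"
proof -
  obtain r' where "leaf_solution 2 (cleaf 2) r'"
    by (rule cleaf_2_leaf_solution)
  then have "\<bar>cleaf 2 (l / 2)\<bar> \<le> 1"
    by (rule leaf_solution_bounded) simp
  then show ?thesis
    using square_eq_of_duplication assms unfolding cleaf_2_duplication[of l] by blast
qed

end
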